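(* Let $\Phi=[\mathbf a_1,\dots,\mathbf a_k]\in\mathbb R^{m\times k}$ have full column rank, let $\mathbf z\in\mathbb R^k$, and let $\mathbf w^\perp\in\mathbb R^m$ be nonzero and orthogonal to the range of $\Phi$; set $\mathbf y=\Phi\mathbf z+\mathbf w^\perp$. Let $I\subsetneq\{1,\dots,k\}$ be a proper subset and $\mathbf P$ the orthogonal projection onto the orthogonal complement of $\mathrm{span}\{\mathbf a_i: i\in I\}$ (the identity if $I=\emptyset$). Then $$\max_{j\in\{1,\dots,k\}}\frac{|\mathbf a_j^T\mathbf P\mathbf y|^2}{\|\mathbf P\mathbf y\|^2}\ \ge\ \frac{\sigma_{\min}^4(\Phi)\,z_{\min}^2}{\sigma_{\max}^2(\Phi)\,k\,z_{\min}^2+\|\mathbf w^\perp\|^2},$$ where $z_{\min}=\min_{j}|z_j|$ and $\sigma_{\min}(\Phi),\sigma_{\max}(\Phi)$ are the smallest and largest singular values of $\Phi$.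
   Context: All vectors and matrices are real; $\mathbf a^T$ denotes transpose. *)

theory Defs
  imports "HOL-Analysis.Analysis"
begin

definition orth_proj :: "'a::euclidean_space set \<Rightarrow> 'a \<Rightarrow> 'a" where
  "orth_proj V y = (THE p. p \<in> V \<and> y - p \<in> orthogonal_comp V)"

definition singular_values :: "real^'k^'m \<Rightarrow> real set" where
  "singular_values A =
     {sqrt l | l. \<exists>x. x \<noteq> 0 \<and> (transpose A ** A) *v x = l *\<^sub>R x}"

definition sigma_min :: "real^'k^'m \<Rightarrow> real" where
  "sigma_min A = Min (singular_values A)"

definition sigma_max :: "real^'k^'m \<Rightarrow> real" where
  "sigma_max A = Max (singular_values A)"

end

theory Submission
  imports Defs
begin

(* Let L be the span of the selected columns a_i (i in I) and P the orthogonal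
   projection onto the orthogonal complement of L.  The noise w is orthogonal to range Phi, hence
   to L, so P y = Phi v + w, where Phi v = P (Phi z) and v agrees with z outside I (the component
   of Phi z in L is a combination of selected columns).  The correlations a_j^T P y are the
   entries of c = Phi^T Phi v, and they vanish on I.  Let mu be the minimum of the Rayleigh
   quotient |Phi x|^2 / |x|^2; a minimiser is an eigenvector of Phi^T Phi, which gives
   sigma_min^2 <= mu <= sigma_max^2.  Applying Cauchy-Schwarz to |Phi v|^2 = v . c yields two
   bounds on M = max_j c_j^2, namely  mu |Phi v|^2 <= k M  and  mu^2 zmin^2 <= M.  Since
   |P y|^2 = |Phi v|^2 + |w|^2, eliminating |Phi v|^2 gives the claim. *)

lemma matrix_vector_inner_transpose:
  fixes A :: "real^'n^'m"
  shows "(A *v x) \<bullet> y = x \<bullet> (transpose A *v y)"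
proof -
  have "(A *v x) \<bullet> y = (x v* transpose A) \<bullet> y" by (simp only: vector_transpose_matrix)
  also have "\<dots> = x \<bullet> (transpose A *v y)" by (rule dot_lmul_matrix)
  finally show ?thesis .
qed

lemma column_inner:
  fixes A :: "real^'n^'m"
  shows "column j A \<bullet> y = (transpose A *v y) $ j"
  by (simp add: matrix_vector_mult_def transpose_def column_def inner_vec_def mult.commute)

lemma orthogonal_comp_range_inner:
  fixes A :: "real^'n^'m"
  assumes "w \<in> orthogonal_comp (range ((*v) A))"
  shows "(A *v x) \<bullet> w = 0"
  using assms unfolding orthogonal_comp_def orthogonal_def by blast

lemma gram_inner:
  fixes A :: "real^'n^'m"
  shows "x \<bullet> ((transpose A ** A) *v y) = (A *v x) \<bullet> (A *v y)"
  by (simp only: matrix_vector_mul_assoc[symmetric] matrix_vector_inner_transpose)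

lemma orth_proj_orthogonal_comp:
  fixes L :: "'a::euclidean_space set"
  assumes L: "subspace L" and p: "p \<in> L" and q: "q \<in> orthogonal_comp L"
  shows "orth_proj (orthogonal_comp L) (p + q) = q"
  unfolding orth_proj_def
proof (rule the_equality)
  have comp_comp: "orthogonal_comp (orthogonal_comp L) = L"
    using L orthogonal_comp_self by blast
  then show "q \<in> orthogonal_comp L \<and> p + q - q \<in> orthogonal_comp (orthogonal_comp L)"
    using p q by simp
  fix r assume r: "r \<in> orthogonal_comp L \<and> p + q - r \<in> orthogonal_comp (orthogonal_comp L)"
  have "q - r \<in> orthogonal_comp L"
    using r q subspace_orthogonal_comp subspace_diff by blast
  moreover have "q - r = (p + q - r) - p" by simp
  then have "q - r \<in> L" using r comp_comp p L subspace_diff by metis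
  ultimately have "(q - r) \<bullet> (q - r) = 0"
    unfolding orthogonal_comp_def orthogonal_def by auto
  then show "r = q" by simp
qed

lemma span_columns_subset:
  fixes A :: "real^'n^'m"
  shows "span ((\<lambda>i. column i A) ` I) \<subseteq> (*v) A ` {d. \<forall>j. j \<notin> I \<longrightarrow> d $ j = 0}"
proof (rule span_minimal)
  have "subspace {d::real^'n. \<forall>j. j \<notin> I \<longrightarrow> d $ j = 0}"
    by (auto simp: subspace_def)
  then show "subspace ((*v) A ` {d. \<forall>j. j \<notin> I \<longrightarrow> d $ j = 0})"
    by (rule linear_subspace_image[OF matrix_vector_mul_linear])
  have "axis i 1 \<in> {d. \<forall>j. j \<notin> I \<longrightarrow> d $ j = (0::real)}" if "i \<in> I" for i
    using that by (auto simp: axis_def)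
  then show "(\<lambda>i. column i A) ` I \<subseteq> (*v) A ` {d. \<forall>j. j \<notin> I \<longrightarrow> d $ j = 0}"
    by (auto simp flip: matrix_vector_mult_basis)
qed

lemma projection_of_measurement:
  fixes Phi :: "real^'k^'m"
  assumes w_orth: "w \<in> orthogonal_comp (range ((*v) Phi))"
  obtains v where "\<And>j. j \<notin> I \<Longrightarrow> v $ j = z $ j"
    and "\<And>j. j \<in> I \<Longrightarrow> column j Phi \<bullet> (Phi *v v) = 0"
    and "orth_proj (orthogonal_comp (span ((\<lambda>i. column i Phi) ` I))) (Phi *v z + w)
           = Phi *v v + w"
proof -
  define L where "L = span ((\<lambda>i. column i Phi) ` I)"
  obtain p u where p: "p \<in> L" and u: "\<And>x. x \<in> L \<Longrightarrow> orthogonal u x"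
    and decomp: "Phi *v z = p + u"
    using orthogonal_subspace_decomp_exists[of "(\<lambda>i. column i Phi) ` I" "Phi *v z"]
    unfolding L_def by metis
  obtain d where d: "\<And>j. j \<notin> I \<Longrightarrow> d $ j = 0" and pd: "p = Phi *v d"
    using span_columns_subset p unfolding L_def by blast
  define v where "v = z - d"
  have u_eq: "u = Phi *v v"
    using decomp pd by (simp add: v_def matrix_vector_mult_diff_distrib)
  have col_L: "column j Phi \<in> L" if "j \<in> I" for j
    unfolding L_def using that by (intro span_base imageI)
  have "x \<bullet> w = 0" if "x \<in> L" for x
  proof -
    have "L \<subseteq> range ((*v) Phi)"
      using span_columns_subset unfolding L_def by blast
    then show ?thesis using that orthogonal_comp_range_inner[OF w_orth] by blast
  qed
  moreover have "x \<bullet> u = 0" if "x \<in> L" for x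
    using u[OF that] by (simp add: orthogonal_def inner_commute)
  ultimately have "u + w \<in> orthogonal_comp L"
    by (simp add: orthogonal_comp_def orthogonal_def inner_add_right)
  then have "orth_proj (orthogonal_comp L) (Phi *v z + w) = u + w"
    using orth_proj_orthogonal_comp[OF _ p] decomp by (simp add: L_def add.assoc)
  moreover have "column j Phi \<bullet> u = 0" if "j \<in> I" for j
    using u[OF col_L[OF that]] by (simp add: orthogonal_def inner_commute)
  ultimately show ?thesis
    using that[of v] d u_eq unfolding L_def by (simp add: v_def)
qed

section \<open>The minimum of the Rayleigh quotient\<close>

text \<open>A vector attaining the minimum mu of |A x|^2 / |x|^2 is an eigenvector of the Gram
  matrix for mu: otherwise moving against the residual would lower the quotient.\<close>
lemma rayleigh_minimiser_eigenvector:
  fixes A :: "real^'n^'m"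
  assumes ray: "\<And>x. mu * norm x ^ 2 \<le> norm (A *v x) ^ 2"
    and attained: "norm (A *v x0) ^ 2 = mu * norm x0 ^ 2"
  shows "(transpose A ** A) *v x0 = mu *\<^sub>R x0"
proof -
  define h where "h = (transpose A ** A) *v x0 - mu *\<^sub>R x0"
  define H where "H = h \<bullet> h"
  define Q where "Q = norm (A *v h) ^ 2 - mu * norm h ^ 2"
  have Q: "Q \<ge> 0" using ray[of h] by (simp add: Q_def)
  have cross: "(A *v h) \<bullet> (A *v x0) - mu * (h \<bullet> x0) = H"
    by (simp add: H_def h_def gram_inner[symmetric] inner_diff_left inner_diff_right
        algebra_simps)
  have expand: "norm (A *v (x0 - e *\<^sub>R h)) ^ 2 - mu * norm (x0 - e *\<^sub>R h) ^ 2
      = e ^ 2 * Q - 2 * e * H" for e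
    using attained cross unfolding Q_def power2_norm_eq_inner
    by (simp add: matrix_vector_mult_diff_distrib matrix_vector_mult_scaleR inner_diff_left
        inner_diff_right inner_commute algebra_simps power2_eq_square)
  have "H = 0"
  proof (rule ccontr)
    assume "H \<noteq> 0"
    then have H: "H > 0" by (simp add: H_def less_le)
    define e where "e = H / (Q + 1)"
    have e: "e > 0" using H Q by (simp add: e_def)
    have "0 \<le> e ^ 2 * Q - 2 * e * H"
      using ray[of "x0 - e *\<^sub>R h"] expand[of e] by simp
    then have "e * (2 * H) \<le> e * (e * Q)" by (simp add: power2_eq_square algebra_simps)
    then have "2 * H \<le> e * Q" using e by simp
    also have "e * Q = H * (Q / (Q + 1))" by (simp add: e_def)
    also have "\<dots> \<le> H * 1" using H Q by (intro mult_left_mono) auto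
    finally show False using H by simp
  qed
  then show ?thesis by (simp add: H_def h_def)
qed

text \<open>The Rayleigh quotient attains its minimum (on the compact unit sphere).\<close>
lemma rayleigh_minimum_exists:
  fixes A :: "real^'n^'m"
  obtains mu x0 where "x0 \<noteq> 0" "norm (A *v x0) ^ 2 = mu * norm x0 ^ 2"
    "\<And>x. mu * norm x ^ 2 \<le> norm (A *v x) ^ 2"
proof -
  let ?f = "\<lambda>x::real^'n. norm (A *v x) ^ 2"
  have "continuous_on (sphere 0 1) ?f"
    by (intro continuous_intros linear_continuous_on matrix_vector_mul_linear)
  moreover have "sphere (0::real^'n) 1 \<noteq> {}" by simp
  ultimately obtain x0 where x0: "x0 \<in> sphere 0 1"
    and min: "\<And>y. y \<in> sphere 0 1 \<Longrightarrow> ?f x0 \<le> ?f y"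
    using continuous_attains_inf[OF compact_sphere] by blast
  have "?f x0 * norm x ^ 2 \<le> ?f x" for x
  proof (cases "x = 0")
    case False
    then have "?f x0 \<le> ?f (inverse (norm x) *\<^sub>R x)" by (intro min) simp
    also have "\<dots> = ?f x / norm x ^ 2"
      by (simp add: matrix_vector_mult_scaleR power_mult_distrib field_simps)
    finally show ?thesis using False by (simp add: field_simps)
  qed simp
  then show ?thesis using x0 by (intro that[of x0 "?f x0"]) auto
qed

lemma gram_eigenvalue_nonneg:
  fixes A :: "real^'n^'m"
  assumes "x \<noteq> 0" "(transpose A ** A) *v x = l *\<^sub>R x"
  shows "l \<ge> 0"
proof -
  have "l * (x \<bullet> x) = (A *v x) \<bullet> (A *v x)" using gram_inner[of x A x] assms(2) by simp
  then have "0 \<le> l * (x \<bullet> x)" by simp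
  moreover have "x \<bullet> x > 0" using assms(1) by simp
  ultimately show ?thesis by (simp add: zero_le_mult_iff)
qed

text \<open>A Gram matrix has finitely many eigenvalues: eigenvectors for distinct eigenvalues are
  orthogonal, hence independent.\<close>
lemma gram_eigenvalues_finite:
  fixes A :: "real^'n^'m"
  shows "finite {l. \<exists>x. x \<noteq> 0 \<and> (transpose A ** A) *v x = l *\<^sub>R x}" (is "finite ?E")
proof -
  let ?G = "transpose A ** A"
  define e where "e l = (SOME x. x \<noteq> 0 \<and> ?G *v x = l *\<^sub>R x)" for l
  have e: "e l \<noteq> 0 \<and> ?G *v e l = l *\<^sub>R e l" if "l \<in> ?E" for l
    using that unfolding e_def mem_Collect_eq by (rule someI_ex)
  have orth: "e l \<bullet> e l' = 0" if "l \<in> ?E" "l' \<in> ?E" "l \<noteq> l'" for l l'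
  proof -
    have "e l \<bullet> (?G *v e l') = e l' \<bullet> (?G *v e l)"
      unfolding gram_inner by (rule inner_commute)
    then have "l' * (e l \<bullet> e l') = l * (e l \<bullet> e l')"
      using e[OF that(1)] e[OF that(2)] by (simp add: inner_commute)
    then show ?thesis using that(3) by simp
  qed
  have inj: "inj_on e ?E"
  proof (rule inj_onI, rule ccontr)
    fix l l' assume l: "l \<in> ?E" and l': "l' \<in> ?E" and "e l = e l'" "l \<noteq> l'"
    then have "e l \<bullet> e l = 0" using orth[OF l l'] by simp
    then show False using e[OF l] by simp
  qed
  have "pairwise orthogonal (e ` ?E)"
    unfolding pairwise_def orthogonal_def
  proof (intro ballI impI)
    fix a b assume "a \<in> e ` ?E" "b \<in> e ` ?E" "a \<noteq> b"
    then obtain l l' where "l \<in> ?E" "l' \<in> ?E" "a = e l" "b = e l'" "l \<noteq> l'" by blast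
    then show "a \<bullet> b = 0" using orth by simp
  qed
  moreover have "0 \<notin> e ` ?E"
  proof
    assume "0 \<in> e ` ?E"
    then obtain l where l: "l \<in> ?E" and "0 = e l" by blast
    then show False using e[OF l] by simp
  qed
  ultimately have "independent (e ` ?E)" by (intro pairwise_orthogonal_independent)
  then have "finite (e ` ?E)" by (rule independent_imp_finite)
  then show ?thesis using inj by (rule finite_imageD)
qed

lemma rayleigh_minimum_singular_values:
  fixes A :: "real^'n^'m"
  obtains mu where "mu \<ge> 0" "\<And>x. mu * norm x ^ 2 \<le> norm (A *v x) ^ 2"
    "sigma_min A \<ge> 0" "sigma_min A ^ 2 \<le> mu" "mu \<le> sigma_max A ^ 2"
proof -
  obtain mu x0 where x0: "x0 \<noteq> 0" and attained: "norm (A *v x0) ^ 2 = mu * norm x0 ^ 2"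
    and ray: "\<And>x. mu * norm x ^ 2 \<le> norm (A *v x) ^ 2"
    using rayleigh_minimum_exists by blast
  let ?E = "{l. \<exists>x. x \<noteq> 0 \<and> (transpose A ** A) *v x = l *\<^sub>R x}"
  have SV: "singular_values A = sqrt ` ?E" unfolding singular_values_def by blast
  have fin: "finite (singular_values A)"
    unfolding SV using gram_eigenvalues_finite by (rule finite_imageI)
  have "mu \<in> ?E" using x0 rayleigh_minimiser_eigenvector[OF ray attained] by blast
  then have mu: "mu \<ge> 0" "sqrt mu \<in> singular_values A"
    using gram_eigenvalue_nonneg unfolding SV by blast+
  have "sigma_min A \<in> singular_values A"
    unfolding sigma_min_def using fin mu(2) by (intro Min_in) auto
  then have s0: "sigma_min A \<ge> 0" unfolding SV by (auto intro: gram_eigenvalue_nonneg)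
  have "sigma_min A \<le> sqrt mu" unfolding sigma_min_def using fin mu(2) by (rule Min_le)
  then have "sigma_min A ^ 2 \<le> mu" using s0 mu(1) by (metis power_mono real_sqrt_pow2)
  moreover have "sqrt mu \<le> sigma_max A" unfolding sigma_max_def using fin mu(2) by (rule Max_ge)
  then have "mu \<le> sigma_max A ^ 2" using mu(1) by (metis power_mono real_sqrt_ge_zero
        real_sqrt_pow2)
  ultimately show ?thesis using that mu(1) ray s0 by blast
qed

section \<open>Bounds on the correlations\<close>

lemma correlation_energy_bound:
  fixes A :: "real^'n^'m"
  assumes mu: "mu \<ge> 0" and ray: "mu * norm x ^ 2 \<le> norm (A *v x) ^ 2"
  shows "mu * norm (A *v x) ^ 2 \<le> norm (transpose A *v (A *v x)) ^ 2"
proof -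
  define c where "c = transpose A *v (A *v x)"
  define t where "t = norm (A *v x) ^ 2"
  have t: "t = x \<bullet> c" "t \<ge> 0"
    unfolding t_def c_def power2_norm_eq_inner
    by (rule matrix_vector_inner_transpose, rule inner_ge_zero)
  have "t \<le> norm x * norm c" using t norm_cauchy_schwarz by metis
  then have "mu * t ^ 2 \<le> mu * (norm x ^ 2 * norm c ^ 2)"
    using t(2) mu by (intro mult_left_mono) (auto simp: power_mult_distrib[symmetric]
        intro: power_mono)
  also have "\<dots> \<le> t * norm c ^ 2"
    using ray mult_right_mono[of _ _ "norm c ^ 2"] by (simp add: t_def mult.assoc[symmetric])
  finally have "t * (mu * t) \<le> t * norm c ^ 2" by (simp add: power2_eq_square algebra_simps)
  then show ?thesis using t(2) by (cases "t = 0") (auto simp: t_def c_def)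
qed

lemma correlation_signal_bound:
  fixes A :: "real^'n^'m"
  assumes mu: "mu \<ge> 0" and ray: "mu * norm x ^ 2 \<le> norm (A *v x) ^ 2"
    and c_S: "\<And>j. j \<notin> S \<Longrightarrow> (transpose A *v (A *v x)) $ j = 0"
    and x': "x' = (\<chi> j. if j \<in> S then x $ j else 0)"
  shows "mu * norm x' \<le> norm (transpose A *v (A *v x))"
proof -
  define c where "c = transpose A *v (A *v x)"
  have "x' \<bullet> c = x \<bullet> c"
    unfolding inner_vec_def using c_S by (intro sum.cong) (auto simp: x' c_def)
  also have "\<dots> = norm (A *v x) ^ 2"
    by (simp add: c_def power2_norm_eq_inner matrix_vector_inner_transpose)
  finally have xc: "x' \<bullet> c = norm (A *v x) ^ 2" .
  have "norm x' ^ 2 \<le> norm x ^ 2"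
    unfolding power2_norm_eq_inner inner_vec_def by (intro sum_mono) (auto simp: x')
  then have "mu * norm x' ^ 2 \<le> mu * norm x ^ 2" using mu by (rule mult_left_mono)
  also have "\<dots> \<le> x' \<bullet> c" using ray xc by simp
  also have "\<dots> \<le> norm x' * norm c" by (rule norm_cauchy_schwarz)
  finally have "norm x' * (mu * norm x') \<le> norm x' * norm c"
    by (simp add: power2_eq_square algebra_simps)
  then show ?thesis
    by (cases "x' = 0") (auto simp: c_def mu)
qed

lemma norm_sq_le_card_Max:
  fixes c :: "real^'n"
  assumes "\<And>j. j \<notin> S \<Longrightarrow> c $ j = 0"
  shows "norm c ^ 2 \<le> real (card S) * (MAX j. (c $ j) ^ 2)"
proof -
  have "norm c ^ 2 = (\<Sum>j\<in>UNIV. (c $ j) ^ 2)"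
    unfolding power2_norm_eq_inner inner_vec_def by (simp add: power2_eq_square)
  also have "\<dots> = (\<Sum>j\<in>S. (c $ j) ^ 2)"
    by (rule sum.mono_neutral_right) (auto simp: assms)
  also have "\<dots> \<le> real (card S) * (MAX j. (c $ j) ^ 2)"
    by (rule sum_bounded_above) simp
  finally show ?thesis .
qed

lemma card_mult_sq_le_norm_sq:
  fixes x :: "real^'n"
  assumes "0 \<le> m" "\<And>j. j \<in> S \<Longrightarrow> m \<le> \<bar>x $ j\<bar>"
  shows "real (card S) * m ^ 2 \<le> norm x ^ 2"
proof -
  have "real (card S) * m ^ 2 \<le> (\<Sum>j\<in>S. (x $ j) ^ 2)"
    using assms by (intro sum_bounded_below) (metis power2_abs power_mono)
  also have "\<dots> \<le> (\<Sum>j\<in>UNIV. (x $ j) ^ 2)" by (rule sum_mono2) auto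
  also have "\<dots> = norm x ^ 2"
    unfolding power2_norm_eq_inner inner_vec_def by (simp add: power2_eq_square)
  finally show ?thesis .
qed

lemma Min_abs_coord:
  fixes z :: "real^'n"
  shows "0 \<le> Min {\<bar>z $ j\<bar> | j. True}" "Min {\<bar>z $ j\<bar> | j. True} \<le> \<bar>z $ j\<bar>"
proof -
  have set: "{\<bar>z $ j\<bar> | j. True} = range (\<lambda>j. \<bar>z $ j\<bar>)" by blast
  have "Min (range (\<lambda>j. \<bar>z $ j\<bar>)) \<in> range (\<lambda>j. \<bar>z $ j\<bar>)" by (rule Min_in) simp_all
  then show "0 \<le> Min {\<bar>z $ j\<bar> | j. True}" unfolding set by auto
  show "Min {\<bar>z $ j\<bar> | j. True} \<le> \<bar>z $ j\<bar>" unfolding set by simp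
qed

text \<open>The largest correlation dominates mu^2 zmin^2: the coordinates of v outside I are
  those of z, and at least one index lies outside I.\<close>
lemma max_correlation_signal_bound:
  fixes Phi :: "real^'k^'m"
  assumes mu: "mu \<ge> 0" and ray: "mu * norm v ^ 2 \<le> norm (Phi *v v) ^ 2"
    and I: "I \<subset> UNIV" and v_z: "\<And>j. j \<notin> I \<Longrightarrow> v $ j = z $ j"
    and c_I: "\<And>j. j \<in> I \<Longrightarrow> (transpose Phi *v (Phi *v v)) $ j = 0"
  shows "mu ^ 2 * Min {\<bar>z $ j\<bar> | j. True} ^ 2
           \<le> (MAX j. ((transpose Phi *v (Phi *v v)) $ j) ^ 2)"
proof -
  define c where "c = transpose Phi *v (Phi *v v)"
  define zmin where "zmin = Min {\<bar>z $ j\<bar> | j. True}"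
  define v' where "v' = (\<chi> j. if j \<in> - I then v $ j else 0)"
  have card: "real (card (- I)) > 0" using I by (auto simp: card_gt_0_iff)
  have "mu * norm v' \<le> norm c"
    using correlation_signal_bound[OF mu ray _ v'_def] c_I by (simp add: c_def)
  then have "mu ^ 2 * norm v' ^ 2 \<le> norm c ^ 2"
    using mu by (metis power_mono power_mult_distrib mult_nonneg_nonneg norm_ge_zero)
  also have "\<dots> \<le> real (card (- I)) * (MAX j. (c $ j) ^ 2)"
    using c_I by (intro norm_sq_le_card_Max) (simp add: c_def)
  finally have upper: "mu ^ 2 * norm v' ^ 2 \<le> real (card (- I)) * (MAX j. (c $ j) ^ 2)" .
  have "real (card (- I)) * zmin ^ 2 \<le> norm v' ^ 2"
    using Min_abs_coord[of z] v_z by (intro card_mult_sq_le_norm_sq) (auto simp: zmin_def v'_def)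
  then have "mu ^ 2 * (real (card (- I)) * zmin ^ 2) \<le> mu ^ 2 * norm v' ^ 2"
    by (simp add: mult_left_mono)
  then have "real (card (- I)) * (mu ^ 2 * zmin ^ 2) \<le> mu ^ 2 * norm v' ^ 2"
    by (simp add: algebra_simps)
  with upper have "real (card (- I)) * (mu ^ 2 * zmin ^ 2) \<le> real (card (- I)) * (MAX j. (c $ j) ^ 2)"
    by linarith
  from mult_left_le_imp_le[OF this card] show ?thesis by (simp add: c_def zmin_def)
qed

text \<open>The arithmetic combination of the spectral bounds with the two correlation bounds;
  t stands for |Phi v|^2, W for |w|^2 and M for the largest squared correlation.\<close>
lemma correlation_ratio_arith:
  fixes s smax mu t K M zm W :: real
  assumes s: "0 \<le> s" "s ^ 2 \<le> mu" "mu \<le> smax ^ 2"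
    and energy: "mu * t \<le> K * M" and signal: "mu ^ 2 * zm ^ 2 \<le> M"
    and pos: "0 \<le> t" "0 < W" "0 \<le> K"
  shows "s ^ 4 * zm ^ 2 / (smax ^ 2 * K * zm ^ 2 + W) \<le> M / (t + W)"
proof -
  have mu: "0 \<le> mu" using s by (meson order_trans zero_le_power2)
  have s4: "s ^ 4 * zm ^ 2 \<le> M"
  proof -
    have "s ^ 4 = (s ^ 2) ^ 2" by simp
    also have "\<dots> \<le> mu ^ 2" using s by (intro power_mono) auto
    finally show ?thesis using signal by (meson mult_right_mono order_trans zero_le_power2)
  qed
  have "s ^ 4 * zm ^ 2 * t = (s ^ 2 * zm ^ 2) * (s ^ 2 * t)" by (simp add: power4_eq_xxxx
        power2_eq_square)
  also have "\<dots> \<le> (smax ^ 2 * zm ^ 2) * (mu * t)"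
    using s pos by (intro mult_mono mult_right_mono) auto
  also have "\<dots> \<le> (smax ^ 2 * zm ^ 2) * (K * M)" using energy by (intro mult_left_mono) auto
  finally have noise_free: "s ^ 4 * zm ^ 2 * t \<le> M * (smax ^ 2 * K * zm ^ 2)"
    by (simp add: algebra_simps)
  have noise: "s ^ 4 * zm ^ 2 * W \<le> M * W" using s4 pos by (intro mult_right_mono) auto
  have "s ^ 4 * zm ^ 2 * (t + W) \<le> M * (smax ^ 2 * K * zm ^ 2 + W)"
    using noise_free noise by (simp add: algebra_simps)
  moreover have "smax ^ 2 * K * zm ^ 2 + W > 0" using pos by (simp add: add_nonneg_pos)
  ultimately show ?thesis using pos by (simp add: divide_simps add_nonneg_pos)
qed

theorem mainTheorem7:
  fixes Phi :: "real^'k^'m" and z :: "real^'k" and w :: "real^'m" and I :: "'k set"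
  assumes full_rank: "rank Phi = CARD('k)"
    and w_nz: "w \<noteq> 0"
    and w_orth: "w \<in> orthogonal_comp (range ((*v) Phi))"
    and I_proper: "I \<subset> UNIV"
  shows "let y = Phi *v z + w;
             P = orth_proj (orthogonal_comp (span ((\<lambda>i. column i Phi) ` I)));
             zmin = Min {\<bar>z $ j\<bar> | j. True}
         in (MAX j\<in>UNIV. \<bar>column j Phi \<bullet> P y\<bar>^2 / (norm (P y))^2)
            \<ge> (sigma_min Phi)^4 * zmin^2 /
               ((sigma_max Phi)^2 * real CARD('k) * zmin^2 + (norm w)^2)"
proof -
  obtain mu where mu: "mu \<ge> 0" and ray: "\<And>x. mu * norm x ^ 2 \<le> norm (Phi *v x) ^ 2"
    and sigma: "sigma_min Phi \<ge> 0" "sigma_min Phi ^ 2 \<le> mu" "mu \<le> sigma_max Phi ^ 2"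
    using rayleigh_minimum_singular_values by blast
  obtain v where v_z: "\<And>j. j \<notin> I \<Longrightarrow> v $ j = z $ j"
    and v_I: "\<And>j. j \<in> I \<Longrightarrow> column j Phi \<bullet> (Phi *v v) = 0"
    and Py: "orth_proj (orthogonal_comp (span ((\<lambda>i. column i Phi) ` I))) (Phi *v z + w)
               = Phi *v v + w"
    using projection_of_measurement[OF w_orth] by blast
  define c where "c = transpose Phi *v (Phi *v v)"
  define M where "M = (MAX j. (c $ j) ^ 2)"
  define zmin where "zmin = Min {\<bar>z $ j\<bar> | j. True}"
  have "M \<in> range (\<lambda>j. (c $ j) ^ 2)" unfolding M_def by (rule Max_in) auto
  then obtain j0 where j0: "M = (c $ j0) ^ 2" by blast
  have corr: "column j Phi \<bullet> (Phi *v v + w) = c $ j" for j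
    using orthogonal_comp_range_inner[OF w_orth, of "axis j 1"]
    by (simp add: c_def inner_add_right column_inner matrix_vector_mult_basis)
  have norm_Py: "norm (Phi *v v + w) ^ 2 = norm (Phi *v v) ^ 2 + norm w ^ 2"
    using orthogonal_comp_range_inner[OF w_orth] by (simp add: norm_add_Pythagorean orthogonal_def)
  have "mu * norm (Phi *v v) ^ 2 \<le> norm c ^ 2"
    unfolding c_def by (rule correlation_energy_bound[OF mu ray])
  also have "\<dots> \<le> real CARD('k) * M"
    using norm_sq_le_card_Max[of UNIV c] by (simp add: M_def)
  finally have energy: "mu * norm (Phi *v v) ^ 2 \<le> real CARD('k) * M" .
  have signal: "mu ^ 2 * zmin ^ 2 \<le> M"
    using max_correlation_signal_bound[OF mu ray I_proper v_z] v_I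
    by (simp add: M_def c_def zmin_def column_inner)
  have "(sigma_min Phi)^4 * zmin^2 / ((sigma_max Phi)^2 * real CARD('k) * zmin^2 + (norm w)^2)
      \<le> \<bar>column j0 Phi \<bullet> (Phi *v v + w)\<bar>^2 / (norm (Phi *v v + w))^2"
    using correlation_ratio_arith[OF sigma energy signal] w_nz by (simp add: corr norm_Py j0)
  also have "\<dots> \<le> (MAX j. \<bar>column j Phi \<bullet> (Phi *v v + w)\<bar>^2 / (norm (Phi *v v + w))^2)"
    by (rule Max_ge) auto
  finally show ?thesis by (simp add: Let_def Py zmin_def)
qed

end
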